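(* For every amalgamation try $\mathbf{x}$, $\mathbf{j}_{\mathbf{x},1}(G_{\mathbf{x},1}) \cap \mathbf{j}_{\mathbf{x},2}(G_{\mathbf{x},2}) = \mathbf{j}_{\mathbf{x},0}(G_{\mathbf{x},0})$.
   Context: A group is locally finite if every finitely generated subgroup is finite. An amalgamation try is a quintuple $\mathbf{x} = (G_0,G_1,G_2,\mathbf{I}_1,\mathbf{I}_2)$, written $G_{\mathbf{x},\ell} = G_\ell$, $\mathbf{I}_{\mathbf{x},\ell} = \mathbf{I}_\ell$, such that: $G_1, G_2$ are locally finite groups and $G_0$ is a subgroup of both; for $\ell = 1,2$, $\mathbf{I}_\ell \subseteq G_\ell$ is a set of representatives of the left cosets of $G_0$ in $G_\ell$ (without repetitions); and $e \in \mathbf{I}_1 \cap \mathbf{I}_2$. Let $\mathcal{U}_{\mathbf{x}} = \{(g_0,g_1,g_2) : g_0 \in G_0, g_1 \in \mathbf{I}_1, g_2 \in \mathbf{I}_2\}$. For $g \in G_\ell$ define $\mathbf{j}_{\mathbf{x},\ell}(g) : \mathcal{U}_{\mathbf{x}} \to \mathcal{U}_{\mathbf{x}}$, $(g_0,g_1,g_2) \mapsto (g_0',g_1',g_2')$: for $\ell = 0$: $(g_0g,g_1,g_2)$; for $\ell = 1$: $g_2' = g_2$ and $(g_1',g_0') \in \mathbf{I}_1 \times G_0$ is unique with $g_1' g_0' = g_1 g_0 g$ in $G_1$; for $\ell = 2$: $g_1' = g_1$ and $(g_2',g_0') \in \mathbf{I}_2 \times G_0$ is unique with $g_2' g_0'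 = g_2 g_0 g$ in $G_2$. Permutations act on the right (product $f_1f_2$ is $u \mapsto f_2(f_1(u))$), and $G_{\mathbf{x}}$ is the permutation group on $\mathcal{U}_{\mathbf{x}}$ generated by $\mathbf{j}_{\mathbf{x},1}(G_1) \cup \mathbf{j}_{\mathbf{x},2}(G_2)$; the maps $\mathbf{j}_{\mathbf{x},\ell}$ are group embeddings into $G_{\mathbf{x}}$ (for $\ell=0$ via $\mathbf{j}_{\mathbf{x},0} = \mathbf{j}_{\mathbf{x},1}\restriction G_0$). *)

theory Defs
  imports "HOL-Algebra.Algebra"
begin

definition locally_finite_group :: "('a, 'b) monoid_scheme \<Rightarrow> bool" where
  "locally_finite_group G \<longleftrightarrow> group G \<and>
     (\<forall>S. finite S \<and> S \<subseteq> carrier G \<longrightarrow> finite (generate G S))"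

definition left_coset_reps :: "('a, 'b) monoid_scheme \<Rightarrow> 'a set \<Rightarrow> 'a set \<Rightarrow> bool" where
  "left_coset_reps G H I \<longleftrightarrow> I \<subseteq> carrier G \<and>
     (\<forall>g \<in> carrier G. \<exists>!i. i \<in> I \<and> i \<in> l_coset G g H)"

text \<open>Amalgamation try (G0, G1, G2, I1, I2): G0 is given as a common subset H of the
  carriers of G1 and G2 which is a subgroup of both, with the two group operations
  agreeing on it.\<close>
definition amalgamation_try ::
  "'a set \<Rightarrow> ('a, 'b) monoid_scheme \<Rightarrow> ('a, 'c) monoid_scheme \<Rightarrow> 'a set \<Rightarrow> 'a set \<Rightarrow> bool" where
  "amalgamation_try H G1 G2 I1 I2 \<longleftrightarrow>
     locally_finite_group G1 \<and> locally_finite_group G2 \<and>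
     subgroup H G1 \<and> subgroup H G2 \<and>
     (\<forall>x \<in> H. \<forall>y \<in> H. x \<otimes>\<^bsub>G1\<^esub> y = x \<otimes>\<^bsub>G2\<^esub> y) \<and>
     left_coset_reps G1 H I1 \<and> left_coset_reps G2 H I2 \<and>
     \<one>\<^bsub>G1\<^esub> \<in> I1 \<and> \<one>\<^bsub>G2\<^esub> \<in> I2"

definition amalg_U :: "'a set \<Rightarrow> 'a set \<Rightarrow> 'a set \<Rightarrow> ('a \<times> 'a \<times> 'a) set" where
  "amalg_U H I1 I2 = H \<times> I1 \<times> I2"

definition amalg_j0 ::
  "'a set \<Rightarrow> ('a, 'b) monoid_scheme \<Rightarrow> 'a set \<Rightarrow> 'a set \<Rightarrow> 'a \<Rightarrow> ('a \<times> 'a \<times> 'a \<Rightarrow> 'a \<times> 'a \<times> 'a)" where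
  "amalg_j0 H G1 I1 I2 g =
     (\<lambda>(g0, g1, g2) \<in> amalg_U H I1 I2. (g0 \<otimes>\<^bsub>G1\<^esub> g, g1, g2))"

definition amalg_j1 ::
  "'a set \<Rightarrow> ('a, 'b) monoid_scheme \<Rightarrow> 'a set \<Rightarrow> 'a set \<Rightarrow> 'a \<Rightarrow> ('a \<times> 'a \<times> 'a \<Rightarrow> 'a \<times> 'a \<times> 'a)" where
  "amalg_j1 H G1 I1 I2 g =
     (\<lambda>(g0, g1, g2) \<in> amalg_U H I1 I2.
        let (g1', g0') = (THE p. fst p \<in> I1 \<and> snd p \<in> H \<and>
                              fst p \<otimes>\<^bsub>G1\<^esub> snd p = g1 \<otimes>\<^bsub>G1\<^esub> g0 \<otimes>\<^bsub>G1\<^esub> g)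
        in (g0', g1', g2))"

definition amalg_j2 ::
  "'a set \<Rightarrow> ('a, 'b) monoid_scheme \<Rightarrow> 'a set \<Rightarrow> 'a set \<Rightarrow> 'a \<Rightarrow> ('a \<times> 'a \<times> 'a \<Rightarrow> 'a \<times> 'a \<times> 'a)" where
  "amalg_j2 H G2 I1 I2 g =
     (\<lambda>(g0, g1, g2) \<in> amalg_U H I1 I2.
        let (g2', g0') = (THE p. fst p \<in> I2 \<and> snd p \<in> H \<and>
                              fst p \<otimes>\<^bsub>G2\<^esub> snd p = g2 \<otimes>\<^bsub>G2\<^esub> g0 \<otimes>\<^bsub>G2\<^esub> g)
        in (g0', g1, g2'))"

end

theory Submission
  imports Defs
begin

text \<open>Every element of G is uniquely i h with i a coset representative and h in H. Hence j1 g
  and j2 g can be computed explicitly, both restrict to j0 on H, and evaluating at the base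
  point (e, e, e): j1 g moves only the first two coordinates and j2 g' only the first and
  third, so j1 g = j2 g' forces the representative of g to be e, i.e. g \<in> H.\<close>

lemma left_coset_reps_decomp_ex1:
  fixes G (structure)
  assumes "group G" "subgroup H G" "left_coset_reps G H I" "x \<in> carrier G"
  shows "\<exists>!p. fst p \<in> I \<and> snd p \<in> H \<and> fst p \<otimes> snd p = x"
proof -
  interpret group G by fact
  have HG: "H \<subseteq> carrier G" and IG: "I \<subseteq> carrier G"
    using assms(2,3) subgroup.subset unfolding left_coset_reps_def by auto
  obtain i where i: "i \<in> I" "i \<in> x <# H"
    and i_unique: "\<And>j. j \<in> I \<Longrightarrow> j \<in> x <# H \<Longrightarrow> j = i"
    using assms(3,4) unfolding left_coset_reps_def by blast
  obtain h where h: "h \<in> H" "i = x \<otimes> h"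
    using i(2) unfolding l_coset_def by blast
  have hG: "h \<in> carrier G" using h(1) HG by blast
  show ?thesis
  proof (rule ex1I[of _ "(i, inv h)"])
    show "fst (i, inv h) \<in> I \<and> snd (i, inv h) \<in> H \<and> fst (i, inv h) \<otimes> snd (i, inv h) = x"
      using i(1) h hG assms(4) subgroup.m_inv_closed[OF assms(2)] by (simp add: m_assoc)
  next
    fix p assume p: "fst p \<in> I \<and> snd p \<in> H \<and> fst p \<otimes> snd p = x"
    then have aG: "fst p \<in> carrier G" and bG: "snd p \<in> carrier G" using HG IG by auto
    have "fst p = x \<otimes> inv snd p"
      using p aG bG by (auto simp: m_assoc)
    then have "fst p \<in> x <# H"
      using p subgroup.m_inv_closed[OF assms(2)] unfolding l_coset_def by auto
    with p have a: "fst p = i" using i_unique by blast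
    have "x \<otimes> h \<otimes> inv h = x" using hG assms(4) by (simp add: m_assoc)
    with p a h(2) have "fst p \<otimes> snd p = fst p \<otimes> inv h" by simp
    then have "snd p = inv h" using aG bG hG by simp
    with a show "p = (i, inv h)" by (simp add: prod_eq_iff)
  qed
qed

lemma left_coset_reps_decomp_the_eq:
  assumes "group G" "subgroup H G" "left_coset_reps G H I" "x \<in> carrier G"
    and "i \<in> I" "h \<in> H" "i \<otimes>\<^bsub>G\<^esub> h = x"
  shows "(THE p. fst p \<in> I \<and> snd p \<in> H \<and> fst p \<otimes>\<^bsub>G\<^esub> snd p = x) = (i, h)"
  using the1_equality[OF left_coset_reps_decomp_ex1[OF assms(1-4)]] assms(5-7) by simp

lemma common_subgroup_one_eq:
  assumes "group G1" "group G2" "subgroup H G1" "subgroup H G2"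
    and "\<forall>x \<in> H. \<forall>y \<in> H. x \<otimes>\<^bsub>G1\<^esub> y = x \<otimes>\<^bsub>G2\<^esub> y"
  shows "\<one>\<^bsub>G1\<^esub> = \<one>\<^bsub>G2\<^esub>"
proof -
  interpret G1: group G1 by fact
  interpret G2: group G2 by fact
  have one: "\<one>\<^bsub>G1\<^esub> \<in> H" using assms(3) by (rule subgroup.one_closed)
  then have "\<one>\<^bsub>G1\<^esub> \<in> carrier G2" using assms(4) subgroup.subset by blast
  moreover have "\<one>\<^bsub>G1\<^esub> \<otimes>\<^bsub>G2\<^esub> \<one>\<^bsub>G1\<^esub> = \<one>\<^bsub>G1\<^esub>"
    using assms(5) one by force
  ultimately show ?thesis by simp
qed

lemma amalg_j1_apply:
  assumes "group G1" "subgroup H G1" "left_coset_reps G1 H I1"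
    and "(g0, g1, g2) \<in> amalg_U H I1 I2" "g \<in> carrier G1"
    and "i \<in> I1" "h \<in> H" "i \<otimes>\<^bsub>G1\<^esub> h = g1 \<otimes>\<^bsub>G1\<^esub> g0 \<otimes>\<^bsub>G1\<^esub> g"
  shows "amalg_j1 H G1 I1 I2 g (g0, g1, g2) = (h, i, g2)"
proof -
  have "g0 \<in> carrier G1" "g1 \<in> carrier G1"
    using assms(2-4) subgroup.subset unfolding amalg_U_def left_coset_reps_def by auto
  then have "g1 \<otimes>\<^bsub>G1\<^esub> g0 \<otimes>\<^bsub>G1\<^esub> g \<in> carrier G1"
    using assms(1,5) by (simp add: group.is_monoid monoid.m_closed)
  from left_coset_reps_decomp_the_eq[OF assms(1-3) this assms(6-8)] show ?thesis
    using assms(4) unfolding amalg_j1_def by simp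
qed

lemma amalg_j2_apply:
  assumes "group G2" "subgroup H G2" "left_coset_reps G2 H I2"
    and "(g0, g1, g2) \<in> amalg_U H I1 I2" "g \<in> carrier G2"
    and "i \<in> I2" "h \<in> H" "i \<otimes>\<^bsub>G2\<^esub> h = g2 \<otimes>\<^bsub>G2\<^esub> g0 \<otimes>\<^bsub>G2\<^esub> g"
  shows "amalg_j2 H G2 I1 I2 g (g0, g1, g2) = (h, g1, i)"
proof -
  have "g0 \<in> carrier G2" "g2 \<in> carrier G2"
    using assms(2-4) subgroup.subset unfolding amalg_U_def left_coset_reps_def by auto
  then have "g2 \<otimes>\<^bsub>G2\<^esub> g0 \<otimes>\<^bsub>G2\<^esub> g \<in> carrier G2"
    using assms(1,5) by (simp add: group.is_monoid monoid.m_closed)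
  from left_coset_reps_decomp_the_eq[OF assms(1-3) this assms(6-8)] show ?thesis
    using assms(4) unfolding amalg_j2_def by simp
qed

lemma amalg_j1_subgroup_eq_j0:
  assumes "group G1" "subgroup H G1" "left_coset_reps G1 H I1" "h \<in> H"
  shows "amalg_j1 H G1 I1 I2 h = amalg_j0 H G1 I1 I2 h"
proof
  fix u show "amalg_j1 H G1 I1 I2 h u = amalg_j0 H G1 I1 I2 h u"
  proof (cases "u \<in> amalg_U H I1 I2")
    case True
    then obtain g0 g1 g2 where u: "u = (g0, g1, g2)" "g0 \<in> H" "g1 \<in> I1"
      unfolding amalg_U_def by auto
    have "g0 \<in> carrier G1" "g1 \<in> carrier G1" "h \<in> carrier G1"
      using u assms subgroup.subset unfolding left_coset_reps_def by auto
    then have "g1 \<otimes>\<^bsub>G1\<^esub> (g0 \<otimes>\<^bsub>G1\<^esub> h) = g1 \<otimes>\<^bsub>G1\<^esub> g0 \<otimes>\<^bsub>G1\<^esub> h"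
      using assms(1) by (simp add: group.is_monoid monoid.m_assoc)
    with amalg_j1_apply[OF assms(1-3)] True u assms(2,4) \<open>h \<in> carrier G1\<close>
    show ?thesis unfolding amalg_j0_def by (simp add: subgroup.m_closed)
  qed (simp add: amalg_j1_def amalg_j0_def)
qed

lemma amalg_j2_subgroup_eq_j0:
  assumes "group G2" "subgroup H G2" "left_coset_reps G2 H I2" "h \<in> H"
  shows "amalg_j2 H G2 I1 I2 h = amalg_j0 H G2 I1 I2 h"
proof
  fix u show "amalg_j2 H G2 I1 I2 h u = amalg_j0 H G2 I1 I2 h u"
  proof (cases "u \<in> amalg_U H I1 I2")
    case True
    then obtain g0 g1 g2 where u: "u = (g0, g1, g2)" "g0 \<in> H" "g2 \<in> I2"
      unfolding amalg_U_def by auto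
    have "g0 \<in> carrier G2" "g2 \<in> carrier G2" "h \<in> carrier G2"
      using u assms subgroup.subset unfolding left_coset_reps_def by auto
    then have "g2 \<otimes>\<^bsub>G2\<^esub> (g0 \<otimes>\<^bsub>G2\<^esub> h) = g2 \<otimes>\<^bsub>G2\<^esub> g0 \<otimes>\<^bsub>G2\<^esub> h"
      using assms(1) by (simp add: group.is_monoid monoid.m_assoc)
    with amalg_j2_apply[OF assms(1-3)] True u assms(2,4) \<open>h \<in> carrier G2\<close>
    show ?thesis unfolding amalg_j0_def by (simp add: subgroup.m_closed)
  qed (simp add: amalg_j2_def amalg_j0_def)
qed

lemma amalg_j0_cong:
  assumes "\<forall>x \<in> H. \<forall>y \<in> H. x \<otimes>\<^bsub>G1\<^esub> y = x \<otimes>\<^bsub>G2\<^esub> y" "h \<in> H"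
  shows "amalg_j0 H G1 I1 I2 h = amalg_j0 H G2 I1 I2 h"
  using assms unfolding amalg_j0_def amalg_U_def by (auto intro!: restrict_ext)

lemma amalgamation_tryD:
  assumes "amalgamation_try H G1 G2 I1 I2"
  shows "group G1" "group G2" "subgroup H G1" "subgroup H G2"
    "left_coset_reps G1 H I1" "left_coset_reps G2 H I2"
    "\<forall>x \<in> H. \<forall>y \<in> H. x \<otimes>\<^bsub>G1\<^esub> y = x \<otimes>\<^bsub>G2\<^esub> y"
    "\<one>\<^bsub>G1\<^esub> \<in> I1" "\<one>\<^bsub>G2\<^esub> \<in> I2"
  using assms unfolding amalgamation_try_def locally_finite_group_def by auto

lemma amalg_j1_eq_j2_imp_mem_subgroup:
  assumes "amalgamation_try H G1 G2 I1 I2" "g \<in> carrier G1" "g' \<in> carrier G2"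
    and "amalg_j1 H G1 I1 I2 g = amalg_j2 H G2 I1 I2 g'"
  shows "g \<in> H"
proof -
  note G = amalgamation_tryD(1-6)[OF assms(1)]
    and ops = amalgamation_tryD(7)[OF assms(1)]
    and reps_one = amalgamation_tryD(8,9)[OF assms(1)]
  interpret G1: group G1 by fact
  interpret G2: group G2 by fact
  let ?e = "\<one>\<^bsub>G1\<^esub>"
  have e2: "\<one>\<^bsub>G2\<^esub> = ?e" using common_subgroup_one_eq[OF G(1-4) ops] ..
  have base: "(?e, ?e, ?e) \<in> amalg_U H I1 I2"
    using reps_one e2 subgroup.one_closed[OF G(3)] unfolding amalg_U_def by auto
  obtain i h where ih: "i \<in> I1" "h \<in> H" "i \<otimes>\<^bsub>G1\<^esub> h = g"
    using left_coset_reps_decomp_ex1[OF G(1,3,5) assms(2)] by auto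
  obtain i' h' where ih': "i' \<in> I2" "h' \<in> H" "i' \<otimes>\<^bsub>G2\<^esub> h' = g'"
    using left_coset_reps_decomp_ex1[OF G(2,4,6) assms(3)] by auto
  have "amalg_j1 H G1 I1 I2 g (?e, ?e, ?e) = (h, i, ?e)"
    using amalg_j1_apply[OF G(1,3,5) base assms(2) ih(1,2)] ih(3) assms(2) by simp
  moreover have "amalg_j2 H G2 I1 I2 g' (?e, ?e, ?e) = (h', ?e, i')"
    using amalg_j2_apply[OF G(2,4,6) base assms(3) ih'(1,2)] ih'(3) assms(3)
    by (simp add: e2[symmetric])
  ultimately have "i = ?e" using assms(4) by simp
  moreover have "h \<in> carrier G1" using ih(2) G(3) subgroup.subset by blast
  ultimately show ?thesis using ih by simp
qed

theorem claim2p4: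
  fixes H :: "'a set" and G1 :: "('a, 'b) monoid_scheme" and G2 :: "('a, 'c) monoid_scheme"
    and I1 I2 :: "'a set"
  assumes "amalgamation_try H G1 G2 I1 I2"
  shows "amalg_j1 H G1 I1 I2 ` carrier G1 \<inter> amalg_j2 H G2 I1 I2 ` carrier G2
           = amalg_j0 H G1 I1 I2 ` H"
proof -
  note G = amalgamation_tryD(1-6)[OF assms] and ops = amalgamation_tryD(7)[OF assms]
  have j1: "amalg_j1 H G1 I1 I2 h = amalg_j0 H G1 I1 I2 h"
    and j2: "amalg_j2 H G2 I1 I2 h = amalg_j0 H G1 I1 I2 h" if "h \<in> H" for h
    using amalg_j1_subgroup_eq_j0[OF G(1,3,5) that] amalg_j2_subgroup_eq_j0[OF G(2,4,6) that]
      amalg_j0_cong[OF ops that] by simp_all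
  show ?thesis
  proof (intro equalityI subsetI)
    fix f assume "f \<in> amalg_j1 H G1 I1 I2 ` carrier G1 \<inter> amalg_j2 H G2 I1 I2 ` carrier G2"
    then obtain g g' where "g \<in> carrier G1" "g' \<in> carrier G2"
      and f: "f = amalg_j1 H G1 I1 I2 g" "f = amalg_j2 H G2 I1 I2 g'" by blast
    with amalg_j1_eq_j2_imp_mem_subgroup[OF assms] have "g \<in> H" by simp
    then show "f \<in> amalg_j0 H G1 I1 I2 ` H" using f(1) j1 by blast
  next
    fix f assume "f \<in> amalg_j0 H G1 I1 I2 ` H"
    then obtain h where "h \<in> H" "f = amalg_j0 H G1 I1 I2 h" by blast
    moreover have "h \<in> carrier G1" "h \<in> carrier G2"
      using \<open>h \<in> H\<close> G(3,4) subgroup.subset by auto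
    ultimately show "f \<in> amalg_j1 H G1 I1 I2 ` carrier G1 \<inter> amalg_j2 H G2 I1 I2 ` carrier G2"
      using j1[of h] j2[of h] by (simp add: rev_image_eqI)
  qed
qed

end
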